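(* Let $\mathcal U$ be a finite nonempty set, $\epsilon_1,\epsilon_2\in(0,1]$, $n_b$ a positive integer, and for each $v\in\mathcal U$ let $a_v\ge0$ be an integer, $\mu_v\in\mathbb R$ and $\sigma_v^2\ge0$. For $p\in I:=[\max\{\epsilon_1,\epsilon_2\},1]$ define $$h_v(p)=\Big(\frac1{\epsilon_2}-\frac1p\Big)a_v^2\mu_v^2n_b+\Big(\frac1{\epsilon_1}-\frac1p\Big)a_v(\mu_v^2+\sigma_v^2)n_b^2+\Big(\frac{p}{\epsilon_1\epsilon_2}-\frac1{\epsilon_1}-\frac1{\epsilon_2}+\frac1p\Big)a_v(\mu_v^2+\sigma_v^2)n_b+\Big(\frac1p-1\Big)a_v^2\mu_v^2n_b^2,$$ $h^*(p)=\max_{v\in\mathcal U}h_v(p)$, and $h'(p)=\max\{h_{v_1}(p),h_{v_2}(p)\}$, where $v_1\in\arg\max_v a_v^2\mu_v^2$ and $v_2\in\arg\max_v a_v(\mu_v^2+\sigma_v^2)$. Let $p'\in\arg\min_{p\in I}h'(p)$ and $p^*\in\arg\min_{p\in I}h^*(p)$. Then $h^*(p')\le 2h^*(p^* )$.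
   Context: Interpretation: $h_v(p)$ is the variance of the SUM join estimator when both tables use universe sampling rate $p$ and uniform sampling rates $\epsilon_1/p$, $\epsilon_2/p$, and all $n_b$ tuples of the second table have join value $v$; $a_v$ is the number of tuples of the first table with join value $v$, and $\mu_v,\sigma_v^2$ are the mean and variance of the aggregated column over those tuples. $h^*$ is the worst-case variance over such concentrated second tables. *)

theory Defs
  imports Complex_Main
begin

text \<open>Variance h_v(p) of the SUM join estimator, for a concentrated second table
  (all n_b tuples with join value v).  Parameters: eps1, eps2 (uniform rates
  times p), nb, a v (count of value v in table 1), mu v, s2 v (mean and variance
  sigma_v^2 of the aggregated column for value v).\<close>
definition hv :: "real \<Rightarrow> real \<Rightarrow> nat \<Rightarrow> ('a \<Rightarrow> nat) \<Rightarrow> ('a \<Rightarrow> real) \<Rightarrow> ('a \<Rightarrow> real)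
    \<Rightarrow> 'a \<Rightarrow> real \<Rightarrow> real" where
  "hv eps1 eps2 nb a mu s2 v p =
     (1/eps2 - 1/p) * (real (a v))^2 * (mu v)^2 * real nb
   + (1/eps1 - 1/p) * real (a v) * ((mu v)^2 + s2 v) * (real nb)^2
   + (p/(eps1*eps2) - 1/eps1 - 1/eps2 + 1/p) * real (a v) * ((mu v)^2 + s2 v) * real nb
   + (1/p - 1) * (real (a v))^2 * (mu v)^2 * (real nb)^2"

definition hstar :: "'a set \<Rightarrow> real \<Rightarrow> real \<Rightarrow> nat \<Rightarrow> ('a \<Rightarrow> nat) \<Rightarrow> ('a \<Rightarrow> real)
    \<Rightarrow> ('a \<Rightarrow> real) \<Rightarrow> real \<Rightarrow> real" where
  "hstar U eps1 eps2 nb a mu s2 p = Max ((\<lambda>v. hv eps1 eps2 nb a mu s2 v p) ` U)"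

definition Ival :: "real \<Rightarrow> real \<Rightarrow> real set" where
  "Ival eps1 eps2 = {max eps1 eps2 .. 1}"

end

theory Submission
  imports Defs
begin

text \<open>On I every h_v is a combination X_v \<alpha>(p) + Y_v \<beta>(p) with nonnegative coefficient
  functions \<alpha>, \<beta> and nonnegative weights X_v = a_v^2 \<mu>_v^2, Y_v = a_v (\<mu>_v^2 + \<sigma>_v^2).
  Hence h_v \<le> h_v1 + h_v2 \<le> 2 h', while trivially h' \<le> h^*; so h' approximates h^* within
  a factor 2 pointwise, and a minimiser of h' is a 2-approximate minimiser of h^*.\<close>

definition hv_coeff_sq :: "real \<Rightarrow> nat \<Rightarrow> real \<Rightarrow> real" where
  "hv_coeff_sq eps2 nb p = (1/eps2 - 1/p) * real nb + (1/p - 1) * (real nb)^2"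

definition hv_coeff_lin :: "real \<Rightarrow> real \<Rightarrow> nat \<Rightarrow> real \<Rightarrow> real" where
  "hv_coeff_lin eps1 eps2 nb p = (1/eps1 - 1/p) * ((real nb)^2 + (p/eps2 - 1) * real nb)"

lemma hv_eq_coeffs:
  assumes "p \<noteq> 0"
  shows "hv eps1 eps2 nb a mu s2 v p =
           (real (a v))^2 * (mu v)^2 * hv_coeff_sq eps2 nb p
         + real (a v) * ((mu v)^2 + s2 v) * hv_coeff_lin eps1 eps2 nb p"
proof -
  have "(1/eps1 - 1/p) * (p/eps2 - 1) = p/(eps1*eps2) - 1/eps1 - 1/eps2 + 1/p"
    using assms by (simp add: algebra_simps)
  then show ?thesis
    unfolding hv_def hv_coeff_sq_def hv_coeff_lin_def
    by (simp only: distrib_left flip: mult.assoc) (simp add: algebra_simps)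
qed

lemma hv_coeff_sq_nonneg:
  assumes "0 < eps2" "eps2 \<le> p" "p \<le> 1"
  shows "0 \<le> hv_coeff_sq eps2 nb p"
proof -
  have "1/p \<le> 1/eps2" using assms by (simp add: frac_le)
  moreover have "1 \<le> 1/p" using assms by simp
  ultimately show ?thesis
    unfolding hv_coeff_sq_def by (intro add_nonneg_nonneg mult_nonneg_nonneg) auto
qed

lemma hv_coeff_lin_nonneg:
  assumes "0 < eps1" "eps1 \<le> p" "0 < eps2" "eps2 \<le> p"
  shows "0 \<le> hv_coeff_lin eps1 eps2 nb p"
proof -
  have "1/p \<le> 1/eps1" using assms by (simp add: frac_le)
  moreover have "1 \<le> p/eps2" using assms by simp
  ultimately show ?thesis
    unfolding hv_coeff_lin_def by (intro add_nonneg_nonneg mult_nonneg_nonneg) auto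
qed

lemma Max_combination_le_twice_max_dominant:
  fixes X Y :: "'a \<Rightarrow> real"
  assumes "finite U" "U \<noteq> {}" "v1 \<in> U" "v2 \<in> U"
    and "\<forall>v\<in>U. 0 \<le> X v \<and> X v \<le> X v1" and "\<forall>v\<in>U. 0 \<le> Y v \<and> Y v \<le> Y v2"
    and "0 \<le> \<alpha>" "0 \<le> \<beta>"
  shows "Max ((\<lambda>v. X v * \<alpha> + Y v * \<beta>) ` U)
           \<le> 2 * max (X v1 * \<alpha> + Y v1 * \<beta>) (X v2 * \<alpha> + Y v2 * \<beta>)"
proof -
  have "X v * \<alpha> + Y v * \<beta> \<le> 2 * max (X v1 * \<alpha> + Y v1 * \<beta>) (X v2 * \<alpha> + Y v2 * \<beta>)"
    if "v \<in> U" for v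
  proof -
    have "X v * \<alpha> \<le> X v1 * \<alpha>" "Y v * \<beta> \<le> Y v2 * \<beta>" "0 \<le> Y v1 * \<beta>" "0 \<le> X v2 * \<alpha>"
      using assms that by (auto intro: mult_right_mono)
    then show ?thesis by (simp add: max_def)
  qed
  then show ?thesis using assms(1,2) by (subst Max_le_iff) auto
qed

lemma hstar_le_twice_max_hv:
  assumes "finite U" "U \<noteq> {}" "0 < eps1" "0 < eps2" "p \<in> Ival eps1 eps2"
    and "\<forall>v\<in>U. 0 \<le> s2 v"
    and "v1 \<in> U" "\<forall>v\<in>U. (real (a v))^2 * (mu v)^2 \<le> (real (a v1))^2 * (mu v1)^2"
    and "v2 \<in> U" "\<forall>v\<in>U. real (a v) * ((mu v)^2 + s2 v) \<le> real (a v2) * ((mu v2)^2 + s2 v2)"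
  shows "hstar U eps1 eps2 nb a mu s2 p
           \<le> 2 * max (hv eps1 eps2 nb a mu s2 v1 p) (hv eps1 eps2 nb a mu s2 v2 p)"
proof -
  have p: "max eps1 eps2 \<le> p" "p \<le> 1" using assms(5) by (auto simp: Ival_def)
  have "p \<noteq> 0" using p assms(3) by auto
  show ?thesis
    unfolding hstar_def hv_eq_coeffs[OF \<open>p \<noteq> 0\<close>]
    using assms p
    by (intro Max_combination_le_twice_max_dominant hv_coeff_sq_nonneg hv_coeff_lin_nonneg) auto
qed

lemma max_hv_le_hstar:
  assumes "finite U" "v1 \<in> U" "v2 \<in> U"
  shows "max (hv eps1 eps2 nb a mu s2 v1 p) (hv eps1 eps2 nb a mu s2 v2 p)
           \<le> hstar U eps1 eps2 nb a mu s2 p"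
  unfolding hstar_def using assms by (auto intro!: Max_ge)

theorem corollary2:
  fixes U :: "'a set" and eps1 eps2 :: real and nb :: nat
    and a :: "'a \<Rightarrow> nat" and mu s2 :: "'a \<Rightarrow> real"
    and v1 v2 :: 'a and p' pstar :: real
  assumes "finite U" and "U \<noteq> {}"
    and "0 < eps1" and "eps1 \<le> 1" and "0 < eps2" and "eps2 \<le> 1"
    and "0 < nb"
    and "\<forall>v\<in>U. 0 \<le> s2 v"
    and "v1 \<in> U" and "\<forall>v\<in>U. (real (a v))^2 * (mu v)^2 \<le> (real (a v1))^2 * (mu v1)^2"
    and "v2 \<in> U" and "\<forall>v\<in>U. real (a v) * ((mu v)^2 + s2 v) \<le> real (a v2) * ((mu v2)^2 + s2 v2)"
    and "p' \<in> Ival eps1 eps2"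
    and "\<forall>p\<in>Ival eps1 eps2.
           max (hv eps1 eps2 nb a mu s2 v1 p') (hv eps1 eps2 nb a mu s2 v2 p')
         \<le> max (hv eps1 eps2 nb a mu s2 v1 p) (hv eps1 eps2 nb a mu s2 v2 p)"
    and "pstar \<in> Ival eps1 eps2"
    and "\<forall>p\<in>Ival eps1 eps2. hstar U eps1 eps2 nb a mu s2 pstar \<le> hstar U eps1 eps2 nb a mu s2 p"
  shows "hstar U eps1 eps2 nb a mu s2 p' \<le> 2 * hstar U eps1 eps2 nb a mu s2 pstar"
proof -
  let ?h' = "\<lambda>p. max (hv eps1 eps2 nb a mu s2 v1 p) (hv eps1 eps2 nb a mu s2 v2 p)"
  have "hstar U eps1 eps2 nb a mu s2 p' \<le> 2 * ?h' p'"
    using assms by (intro hstar_le_twice_max_hv) auto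
  also have "\<dots> \<le> 2 * ?h' pstar"
    using assms by auto
  also have "\<dots> \<le> 2 * hstar U eps1 eps2 nb a mu s2 pstar"
    using assms max_hv_le_hstar by simp
  finally show ?thesis .
qed

end
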